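(* For every integer $n>24$, the generalized Petersen graph $GP(n,4)$ is not $\ell$-distance-balanced for any integer $\ell$ with $3\le \ell<{\rm diam}(GP(n,4))$.
   Context: For a connected graph $G$ and $x,y\in V(G)$, $d_G(x,y)$ denotes the distance and ${\rm diam}(G)$ the diameter. Let $W_{xy}=\{w\in V(G): d_G(w,x)<d_G(w,y)\}$. $G$ is called $\ell$-distance-balanced if $|W_{xy}|=|W_{yx}|$ for every pair $x,y\in V(G)$ with $d_G(x,y)=\ell$. For integers $n\ge 3$ and $1\le k<n/2$, the generalized Petersen graph $GP(n,k)$ has vertex set $\{u_i: i\in\mathbb{Z}_n\}\cup\{v_i: i\in\mathbb{Z}_n\}$ and edge set $\{u_iu_{i+1}: i\in\mathbb{Z}_n\}\cup\{v_iv_{i+k}: i\in\mathbb{Z}_n\}\cup\{u_iv_i: i\in\mathbb{Z}_n\}$. *)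

theory Defs
  imports Main
begin

fun walk_of_len :: "'a set \<Rightarrow> ('a \<Rightarrow> 'a \<Rightarrow> bool) \<Rightarrow> nat \<Rightarrow> 'a \<Rightarrow> 'a \<Rightarrow> bool" where
  "walk_of_len V E 0 x y = (x \<in> V \<and> x = y)"
| "walk_of_len V E (Suc m) x y = (x \<in> V \<and> (\<exists>z\<in>V. E x z \<and> walk_of_len V E m z y))"

text \<open>Graph distance (meaningful for connected graphs).\<close>
definition gdist :: "'a set \<Rightarrow> ('a \<Rightarrow> 'a \<Rightarrow> bool) \<Rightarrow> 'a \<Rightarrow> 'a \<Rightarrow> nat" where
  "gdist V E x y = (LEAST m. walk_of_len V E m x y)"

definition gdiam :: "'a set \<Rightarrow> ('a \<Rightarrow> 'a \<Rightarrow> bool) \<Rightarrow> nat" where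
  "gdiam V E = Max {gdist V E x y | x y. x \<in> V \<and> y \<in> V}"

definition Wset :: "'a set \<Rightarrow> ('a \<Rightarrow> 'a \<Rightarrow> bool) \<Rightarrow> 'a \<Rightarrow> 'a \<Rightarrow> 'a set" where
  "Wset V E x y = {w \<in> V. gdist V E w x < gdist V E w y}"

definition l_distance_balanced :: "'a set \<Rightarrow> ('a \<Rightarrow> 'a \<Rightarrow> bool) \<Rightarrow> nat \<Rightarrow> bool" where
  "l_distance_balanced V E l =
     (\<forall>x\<in>V. \<forall>y\<in>V. gdist V E x y = l \<longrightarrow> card (Wset V E x y) = card (Wset V E y x))"

text \<open>Generalized Petersen graph GP(n,k): vertex (False,i) is u_i, (True,i) is v_i, i < n.\<close>
definition gp_verts :: "nat \<Rightarrow> (bool \<times> nat) set" where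
  "gp_verts n = {(b, i). i < n}"

definition gp_adj :: "nat \<Rightarrow> nat \<Rightarrow> bool \<times> nat \<Rightarrow> bool \<times> nat \<Rightarrow> bool" where
  "gp_adj n k x y = (case (x, y) of
      ((False, i), (False, j)) \<Rightarrow> j = (i + 1) mod n \<or> i = (j + 1) mod n
    | ((True, i), (True, j)) \<Rightarrow> j = (i + k) mod n \<or> i = (j + k) mod n
    | ((False, i), (True, j)) \<Rightarrow> i = j
    | ((True, i), (False, j)) \<Rightarrow> i = j)"

end

(* For n > 24 all distances in GP(n,4) are explicit: from a vertex u_x or v_x, a vertex whose
   index differs by i is at distance min (G i) (G (n - i)), where G is the corresponding
   distance profile of the infinite graph with rim \<int> and inner edges i -- i + 4. These formulas
   are confirmed by a potential argument: the predicted distance grows by at most one along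
   every edge and is realised by an explicit walk.

   For x = u_0 and y = v_t, pairing u_s with v_(t-s) writes |W_xy| - |W_yx| as a sum of terms
   that are non-positive except for s = \<plusminus>1, \<plusminus>2, \<plusminus>3. For each 3 \<le> l < diam one picks t with
   d(u_0, v_t) = l and a few further offsets whose negative terms outweigh the six exceptional
   ones: for l \<ge> 8 the offset 4 (l div 2) suffices, while for l \<le> 7 explicit certificates are
   checked, symbolically for n \<ge> 50 and by evaluation for 25 \<le> n < 50. *)

theory Submission
  imports Defs
begin

lemma walk_of_len_append:
  "walk_of_len V E m a b \<Longrightarrow> walk_of_len V E k b c \<Longrightarrow> walk_of_len V E (m + k) a c"
  by (induction m arbitrary: a) auto

lemma gdist_le_walk: "walk_of_len V E m a b \<Longrightarrow> gdist V E a b \<le> m"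
  unfolding gdist_def by (rule Least_le)

lemma walk_of_len_gdist: "walk_of_len V E m a b \<Longrightarrow> walk_of_len V E (gdist V E a b) a b"
  unfolding gdist_def by (rule LeastI)

lemma walk_of_len_min:
  "walk_of_len V E m a b \<Longrightarrow> walk_of_len V E k a b \<Longrightarrow> walk_of_len V E (min m k) a b"
  by (simp add: min_def)

lemma walk_of_len_potential_le:
  assumes "\<And>z z'. z \<in> V \<Longrightarrow> z' \<in> V \<Longrightarrow> E z z' \<Longrightarrow> P z' \<le> P z + (1::nat)"
  shows "walk_of_len V E m a b \<Longrightarrow> P b \<le> P a + m"
proof (induction m arbitrary: a)
  case (Suc m)
  then obtain z where "a \<in> V" "z \<in> V" "E a z" "walk_of_len V E m z b" by auto
  then show ?case using Suc.IH[of z] assms[of a z] by auto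
qed simp

lemma gdist_eq_potential:
  assumes lip: "\<And>z z'. z \<in> V \<Longrightarrow> z' \<in> V \<Longrightarrow> E z z' \<Longrightarrow> P z' \<le> P z + (1::nat)"
    and "P a = 0" and walk: "walk_of_len V E (P b) a b"
  shows "gdist V E a b = P b"
proof -
  have "P b \<le> P a + gdist V E a b"
    using walk_of_len_potential_le[OF lip walk_of_len_gdist[OF walk]] .
  with \<open>P a = 0\<close> gdist_le_walk[OF walk] show ?thesis by simp
qed

section \<open>Distance profiles\<close>

text \<open>Distances from u_0 to u_k, from u_0 to v_k and from v_0 to v_k in the infinite
  graph with rim \<int> and inner edges i -- i + 4. Writing k = 4q + r, a shortest route uses
  q inner edges and min r 2 further edges (for r = 3: one more inner edge and one rim edge
  back), plus the spokes needed to change sides.\<close>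

definition line_uu :: "nat \<Rightarrow> nat" where
  "line_uu k = (if k < 4 then k else k div 4 + 2 + min (k mod 4) 2)"

definition line_uv :: "nat \<Rightarrow> nat" where
  "line_uv k = k div 4 + 1 + min (k mod 4) 2"

definition line_vv :: "nat \<Rightarrow> nat" where
  "line_vv k = (if k mod 4 = 0 then k div 4 else k div 4 + 2 + min (k mod 4) 2)"

lemmas line_defs = line_uu_def line_uv_def line_vv_def

lemma nat_cases_mod_4:
  fixes k :: nat
  obtains q where "k = 4 * q" | q where "k = 4 * q + 1" | q where "k = 4 * q + 2"
    | q where "k = 4 * q + 3"
proof -
  have "k mod 4 = 0 \<or> k mod 4 = 1 \<or> k mod 4 = 2 \<or> k mod 4 = 3" by linarith
  then show ?thesis
    using that div_mult_mod_eq[of k 4] by (metis add.commute add.right_neutral mult.commute)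
qed

lemma line_uu_Suc: "line_uu (Suc k) \<le> line_uu k + 1" "line_uu k \<le> line_uu (Suc k) + 1"
  by (cases k rule: nat_cases_mod_4; simp add: line_uu_def mod_Suc div_Suc)+

lemma line_uv_Suc: "line_uv (Suc k) \<le> line_uv k + 1" "line_uv k \<le> line_uv (Suc k) + 1"
  by (cases k rule: nat_cases_mod_4; simp add: line_uv_def mod_Suc div_Suc)+

lemma line_uv_add_4: "line_uv (k + 4) = line_uv k + 1"
  by (cases k rule: nat_cases_mod_4; simp add: line_uv_def mod_Suc div_Suc)

lemma line_vv_add_4: "line_vv (k + 4) = line_vv k + 1"
  by (cases k rule: nat_cases_mod_4; simp add: line_vv_def mod_Suc div_Suc)

lemma line_spoke:
  "line_uu k \<le> line_uv k + 1" "line_uv k \<le> line_uu k + 1"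
  "line_vv k \<le> line_uv k + 1" "line_uv k \<le> line_vv k + 1"
  by (cases k rule: nat_cases_mod_4; simp add: line_defs mod_Suc div_Suc)+

lemma div_4_le_line: "k div 4 \<le> line_uu k" "k div 4 \<le> line_uv k" "k div 4 \<le> line_vv k"
  by (simp_all add: line_defs)

lemma line_le_4:
  assumes "j \<le> 4"
  shows "line_uv j \<le> line_uv (4 - j) + 1 \<and> line_uv j \<le> 4"
    "line_vv j \<le> line_vv (4 - j) + 1 \<and> line_vv j \<le> 4"
proof -
  have "j = 0 \<or> j = 1 \<or> j = 2 \<or> j = 3 \<or> j = 4" using assms by linarith
  then show "line_uv j \<le> line_uv (4 - j) + 1 \<and> line_uv j \<le> 4"
    "line_vv j \<le> line_vv (4 - j) + 1 \<and> line_vv j \<le> 4"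
    by (auto simp: line_defs)
qed

definition cyc :: "(nat \<Rightarrow> nat) \<Rightarrow> nat \<Rightarrow> nat \<Rightarrow> nat" where
  "cyc G n i = min (G i) (G (n - i))"

lemma cyc_Suc_mod:
  assumes "\<And>k. G (Suc k) \<le> G k + 1" and "\<And>k. G k \<le> G (Suc k) + 1" and "i < n"
  shows "cyc G n ((i + 1) mod n) \<le> cyc G n i + 1" "cyc G n i \<le> cyc G n ((i + 1) mod n) + 1"
proof -
  have "cyc G n ((i + 1) mod n) \<le> cyc G n i + 1 \<and> cyc G n i \<le> cyc G n ((i + 1) mod n) + 1"
  proof (cases "i + 1 < n")
    case True
    then have "(i + 1) mod n = Suc i" "n - i = Suc (n - Suc i)" by auto
    then show ?thesis
      unfolding cyc_def using assms(1,2)[of i] assms(1,2)[of "n - Suc i"] by (auto simp: min_def)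
  next
    case False
    then have "n = Suc i" using \<open>i < n\<close> by simp
    then have "cyc G n ((i + 1) mod n) = min (G 0) (G (Suc i))" "cyc G n i = min (G i) (G 1)"
      by (simp_all add: cyc_def)
    then show ?thesis using assms(1,2)[of 0] assms(1,2)[of i] by (simp add: min_def)
  qed
  then show "cyc G n ((i + 1) mod n) \<le> cyc G n i + 1" "cyc G n i \<le> cyc G n ((i + 1) mod n) + 1"
    by auto
qed

text \<open>Near the wrap-around the two directions differ by less than a full inner step, while
  for n > 24 the long way round costs at least 5.\<close>

lemma cyc_add_4_mod:
  assumes step: "\<And>k. G (k + 4) = G k + 1" and lower: "\<And>k. k div 4 \<le> G k"
    and small: "\<And>j. j \<le> 4 \<Longrightarrow> G j \<le> G (4 - j) + 1 \<and> G j \<le> 4"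
    and "i < n" and "24 < n"
  shows "cyc G n ((i + 4) mod n) \<le> cyc G n i + 1" "cyc G n i \<le> cyc G n ((i + 4) mod n) + 1"
proof -
  have "cyc G n ((i + 4) mod n) \<le> cyc G n i + 1 \<and> cyc G n i \<le> cyc G n ((i + 4) mod n) + 1"
  proof (cases "i + 4 < n")
    case True
    define m where "m = n - (i + 4)"
    have "(i + 4) mod n = i + 4" "n - (i + 4) = m" "n - i = m + 4" using True by (auto simp: m_def)
    then have "cyc G n ((i + 4) mod n) = min (G i + 1) (G m)" "cyc G n i = min (G i) (G m + 1)"
      by (simp_all only: cyc_def step)
    then show ?thesis by (simp add: min_def)
  next
    case False
    define j where "j = i + 4 - n"
    have j: "j < 4" "(i + 4) mod n = j" "n - i = 4 - j"
      using False \<open>i < n\<close> \<open>24 < n\<close> by (auto simp: j_def le_mod_geq)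
    have "5 \<le> i div 4" "5 \<le> (n - j) div 4" using False \<open>24 < n\<close> j(1) by auto
    then have "5 \<le> G i" "5 \<le> G (n - j)" using lower[of i] lower[of "n - j"] by linarith+
    moreover have "G j \<le> G (4 - j) + 1" "G j \<le> 4" "G (4 - j) \<le> G j + 1" "G (4 - j) \<le> 4"
      using small[of j] small[of "4 - j"] j(1) by auto
    ultimately show ?thesis unfolding cyc_def j(2,3) by (auto simp: min_def)
  qed
  then show "cyc G n ((i + 4) mod n) \<le> cyc G n i + 1" "cyc G n i \<le> cyc G n ((i + 4) mod n) + 1"
    by auto
qed

section \<open>Distances in GP(n,4)\<close>

abbreviation gp4_walk :: "nat \<Rightarrow> nat \<Rightarrow> bool \<times> nat \<Rightarrow> bool \<times> nat \<Rightarrow> bool" where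
  "gp4_walk n m a b \<equiv> walk_of_len (gp_verts n) (gp_adj n 4) m a b"

abbreviation gp4_dist :: "nat \<Rightarrow> bool \<times> nat \<Rightarrow> bool \<times> nat \<Rightarrow> nat" where
  "gp4_dist n a b \<equiv> gdist (gp_verts n) (gp_adj n 4) a b"

definition gp_u :: "nat \<Rightarrow> int \<Rightarrow> bool \<times> nat" where
  "gp_u n z = (False, nat (z mod int n))"

definition gp_v :: "nat \<Rightarrow> int \<Rightarrow> bool \<times> nat" where
  "gp_v n z = (True, nat (z mod int n))"

lemma gp_u_of_nat: "x < n \<Longrightarrow> gp_u n (int x) = (False, x)"
  and gp_v_of_nat: "x < n \<Longrightarrow> gp_v n (int x) = (True, x)"
  by (simp_all add: gp_u_def gp_v_def of_nat_mod[symmetric])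

lemma gp_u_in_verts: "0 < n \<Longrightarrow> gp_u n z \<in> gp_verts n"
  and gp_v_in_verts: "0 < n \<Longrightarrow> gp_v n z \<in> gp_verts n"
  by (auto simp: gp_u_def gp_v_def gp_verts_def nat_less_iff)

lemma nat_mod_add:
  assumes "0 < n" "0 \<le> c"
  shows "nat ((z + c) mod int n) = (nat (z mod int n) + nat c) mod n"
proof -
  have "int ((nat (z mod int n) + nat c) mod n) = (z mod int n + c) mod int n"
    using assms by (simp add: of_nat_mod)
  also have "\<dots> = (z + c) mod int n" by (simp add: mod_simps)
  finally show ?thesis by (metis nat_int)
qed

lemma gp_adj_rim:
  "0 < n \<Longrightarrow> gp_adj n 4 (gp_u n z) (gp_u n (z + 1)) \<and> gp_adj n 4 (gp_u n (z + 1)) (gp_u n z)"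
  unfolding gp_u_def gp_adj_def using nat_mod_add[of n 1 z] by auto

lemma gp_adj_inner:
  "0 < n \<Longrightarrow> gp_adj n 4 (gp_v n z) (gp_v n (z + 4)) \<and> gp_adj n 4 (gp_v n (z + 4)) (gp_v n z)"
  unfolding gp_v_def gp_adj_def using nat_mod_add[of n 4 z] by auto

lemma gp4_walk_spoke: "0 < n \<Longrightarrow> gp4_walk n 1 (gp_u n z) (gp_v n z)"
  "0 < n \<Longrightarrow> gp4_walk n 1 (gp_v n z) (gp_u n z)"
  using gp_u_in_verts gp_v_in_verts by (auto simp: gp_u_def gp_v_def gp_adj_def)

lemma walk_of_len_along_line:
  assumes in_V: "\<And>z. f z \<in> V" and fwd: "\<And>z. E (f z) (f (z + 1))" and bwd: "\<And>z. E (f (z + 1)) (f z)"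
  shows "walk_of_len V E (nat \<bar>a\<bar>) (f z) (f (z + a))"
proof -
  have up: "walk_of_len V E k (f z) (f (z + int k))" for k z
  proof (induction k arbitrary: z)
    case (Suc k)
    then show ?case using in_V fwd[of z] Suc.IH[of "z + 1"] by (auto simp: add.assoc)
  qed (simp add: in_V)
  have down: "walk_of_len V E k (f z) (f (z - int k))" for k z
  proof (induction k arbitrary: z)
    case (Suc k)
    then show ?case using in_V bwd[of "z - 1"] Suc.IH[of "z - 1"] by (auto simp: algebra_simps)
  qed (simp add: in_V)
  show ?thesis using up[of "nat a" z] down[of "nat (- a)" z] by (cases "0 \<le> a") auto
qed

lemma gp4_walk_rim: "0 < n \<Longrightarrow> gp4_walk n (nat \<bar>a\<bar>) (gp_u n z) (gp_u n (z + a))"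
  by (rule walk_of_len_along_line) (use gp_adj_rim gp_u_in_verts in auto)

lemma gp4_walk_inner:
  assumes "0 < n"
  shows "gp4_walk n (nat \<bar>b\<bar>) (gp_v n z) (gp_v n (z + 4 * b))"
proof -
  have "gp4_walk n (nat \<bar>b\<bar>) (gp_v n (z + 4 * 0)) (gp_v n (z + 4 * (0 + b)))"
  proof (rule walk_of_len_along_line[where f = "\<lambda>w. gp_v n (z + 4 * w)"])
    fix w
    show "gp_adj n 4 (gp_v n (z + 4 * w)) (gp_v n (z + 4 * (w + 1)))"
      "gp_adj n 4 (gp_v n (z + 4 * (w + 1))) (gp_v n (z + 4 * w))"
      using gp_adj_inner[OF assms, of "z + 4 * w"] by (simp_all add: algebra_simps)
  qed (rule gp_v_in_verts[OF assms])
  then show ?thesis by simp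
qed

lemma decompose_offset:
  fixes e :: int
  obtains a b where "e = a + 4 * b" "nat \<bar>a\<bar> + nat \<bar>b\<bar> = nat \<bar>e\<bar> div 4 + min (nat \<bar>e\<bar> mod 4) 2"
proof -
  define k where "k = nat \<bar>e\<bar>"
  obtain a b where ab: "int k = a + 4 * b" "nat \<bar>a\<bar> + nat \<bar>b\<bar> = k div 4 + min (k mod 4) 2"
  proof (cases k rule: nat_cases_mod_4)
    case (1 q)
    then show ?thesis using that[of 0 "int q"] by simp
  next
    case (2 q)
    then show ?thesis using that[of 1 "int q"] by (simp add: mod_Suc div_Suc)
  next
    case (3 q)
    then show ?thesis using that[of 2 "int q"] by (simp add: mod_Suc div_Suc)
  next
    case (4 q)
    then show ?thesis using that[of "-1" "int q + 1"] by (simp add: mod_Suc div_Suc)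
  qed
  have "e = a + 4 * b \<or> e = - a + 4 * - b" using ab(1) k_def by arith
  then show ?thesis
  proof
    assume "e = a + 4 * b"
    then show ?thesis using that ab(2) k_def by blast
  next
    assume "e = - a + 4 * - b"
    then show ?thesis using that[of "- a" "- b"] ab(2) k_def by simp
  qed
qed

lemma gp4_walk_u_u:
  assumes "0 < n"
  shows "gp4_walk n (line_uu (nat \<bar>e\<bar>)) (gp_u n z) (gp_u n (z + e))"
proof (cases "nat \<bar>e\<bar> < 4")
  case True
  then show ?thesis using gp4_walk_rim[OF assms] by (simp add: line_uu_def)
next
  case False
  obtain a b where e: "e = a + 4 * b"
    and len: "nat \<bar>a\<bar> + nat \<bar>b\<bar> = nat \<bar>e\<bar> div 4 + min (nat \<bar>e\<bar> mod 4) 2"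
    by (rule decompose_offset)
  have "gp4_walk n (1 + nat \<bar>b\<bar> + 1 + nat \<bar>a\<bar>) (gp_u n z) (gp_u n (z + 4 * b + a))"
    using walk_of_len_append[OF walk_of_len_append[OF walk_of_len_append[OF
        gp4_walk_spoke(1)[OF assms] gp4_walk_inner[OF assms]] gp4_walk_spoke(2)[OF assms]]
        gp4_walk_rim[OF assms]] .
  moreover have "line_uu (nat \<bar>e\<bar>) = 1 + nat \<bar>b\<bar> + 1 + nat \<bar>a\<bar>"
    using False len by (simp add: line_uu_def)
  moreover have "z + e = z + 4 * b + a" using e by simp
  ultimately show ?thesis by (simp add: add.assoc del: walk_of_len.simps)
qed

lemma gp4_walk_u_v:
  assumes "0 < n"
  shows "gp4_walk n (line_uv (nat \<bar>e\<bar>)) (gp_u n z) (gp_v n (z + e))"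
proof -
  obtain a b where e: "e = a + 4 * b"
    and len: "nat \<bar>a\<bar> + nat \<bar>b\<bar> = nat \<bar>e\<bar> div 4 + min (nat \<bar>e\<bar> mod 4) 2"
    by (rule decompose_offset)
  have "gp4_walk n (nat \<bar>a\<bar> + 1 + nat \<bar>b\<bar>) (gp_u n z) (gp_v n (z + a + 4 * b))"
    using walk_of_len_append[OF walk_of_len_append[OF
        gp4_walk_rim[OF assms] gp4_walk_spoke(1)[OF assms]] gp4_walk_inner[OF assms]] .
  moreover have "line_uv (nat \<bar>e\<bar>) = nat \<bar>a\<bar> + 1 + nat \<bar>b\<bar>" using len by (simp add: line_uv_def)
  moreover have "z + e = z + a + 4 * b" using e by simp
  ultimately show ?thesis by (simp add: add.assoc del: walk_of_len.simps)
qed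

lemma gp4_walk_v_u:
  assumes "0 < n"
  shows "gp4_walk n (line_uv (nat \<bar>e\<bar>)) (gp_v n z) (gp_u n (z + e))"
proof -
  obtain a b where e: "e = a + 4 * b"
    and len: "nat \<bar>a\<bar> + nat \<bar>b\<bar> = nat \<bar>e\<bar> div 4 + min (nat \<bar>e\<bar> mod 4) 2"
    by (rule decompose_offset)
  have "gp4_walk n (nat \<bar>b\<bar> + 1 + nat \<bar>a\<bar>) (gp_v n z) (gp_u n (z + 4 * b + a))"
    using walk_of_len_append[OF walk_of_len_append[OF
        gp4_walk_inner[OF assms] gp4_walk_spoke(2)[OF assms]] gp4_walk_rim[OF assms]] .
  moreover have "line_uv (nat \<bar>e\<bar>) = nat \<bar>b\<bar> + 1 + nat \<bar>a\<bar>" using len by (simp add: line_uv_def)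
  moreover have "z + e = z + 4 * b + a" using e by simp
  ultimately show ?thesis by (simp add: add.assoc del: walk_of_len.simps)
qed

lemma gp4_walk_v_v:
  assumes "0 < n"
  shows "gp4_walk n (line_vv (nat \<bar>e\<bar>)) (gp_v n z) (gp_v n (z + e))"
proof (cases "nat \<bar>e\<bar> mod 4 = 0")
  case True
  then obtain q where "nat \<bar>e\<bar> = 4 * q" by (metis dvd_def mod_0_imp_dvd)
  then have "e = 4 * int q \<or> e = 4 * - int q" by arith
  then obtain c where "e = 4 * c" by blast
  then show ?thesis using gp4_walk_inner[OF assms, of c z] True
    by (simp add: line_vv_def abs_mult nat_mult_distrib)
next
  case False
  obtain a b where e: "e = a + 4 * b"
    and len: "nat \<bar>a\<bar> + nat \<bar>b\<bar> = nat \<bar>e\<bar> div 4 + min (nat \<bar>e\<bar> mod 4) 2"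
    by (rule decompose_offset)
  have "gp4_walk n (1 + nat \<bar>a\<bar> + 1 + nat \<bar>b\<bar>) (gp_v n z) (gp_v n (z + a + 4 * b))"
    using walk_of_len_append[OF walk_of_len_append[OF walk_of_len_append[OF
        gp4_walk_spoke(2)[OF assms] gp4_walk_rim[OF assms]] gp4_walk_spoke(1)[OF assms]]
        gp4_walk_inner[OF assms]] .
  moreover have "line_vv (nat \<bar>e\<bar>) = 1 + nat \<bar>a\<bar> + 1 + nat \<bar>b\<bar>"
    using False len by (simp add: line_vv_def)
  moreover have "z + e = z + a + 4 * b" using e by simp
  ultimately show ?thesis by (simp add: add.assoc del: walk_of_len.simps)
qed

lemma offset_add_mod:
  fixes x n i c :: nat
  assumes "x < n"
  shows "((i + c) mod n + n - x) mod n = ((i + n - x) mod n + c) mod n"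
proof -
  have "((i + c) mod n + n - x) mod n = ((i + c) mod n + (n - x)) mod n"
    using assms by (simp add: less_imp_le)
  also have "\<dots> = (i + c + (n - x)) mod n" by (simp add: mod_add_left_eq)
  also have "\<dots> = (i + (n - x) + c) mod n" by (simp add: algebra_simps)
  also have "\<dots> = ((i + (n - x)) mod n + c) mod n" by (simp add: mod_add_left_eq)
  also have "i + (n - x) = i + n - x" using assms by simp
  finally show ?thesis .
qed

lemma offset_back_mod:
  assumes "x < n" "i < n"
  shows "(int x + int ((i + n - x) mod n)) mod int n = int i"
    "(int x + (int ((i + n - x) mod n) - int n)) mod int n = int i"
proof -
  have "int ((i + n - x) mod n) = (int i + int n - int x) mod int n"
    using assms by (simp add: of_nat_mod)
  then have "(int x + int ((i + n - x) mod n)) mod int n = (int i + int n) mod int n"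
    by (simp add: mod_add_right_eq)
  also have "\<dots> = int i" using assms by simp
  finally show "(int x + int ((i + n - x) mod n)) mod int n = int i" .
  then show "(int x + (int ((i + n - x) mod n) - int n)) mod int n = int i"
    by (simp add: algebra_simps)
qed

text \<open>Ga and Gb are the distance profiles from a fixed source to the rim and to the inner
  cycle, and pot n x is the distance they predict from the source with index x.\<close>

locale gp4_profile =
  fixes Ga Gb :: "nat \<Rightarrow> nat"
  assumes rim_Suc: "\<And>k. Ga (Suc k) \<le> Ga k + 1" "\<And>k. Ga k \<le> Ga (Suc k) + 1"
    and inner_add_4: "\<And>k. Gb (k + 4) = Gb k + 1"
    and inner_lower: "\<And>k. k div 4 \<le> Gb k"
    and inner_small: "\<And>j. j \<le> 4 \<Longrightarrow> Gb j \<le> Gb (4 - j) + 1 \<and> Gb j \<le> 4"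
    and spoke: "\<And>k. Ga k \<le> Gb k + 1" "\<And>k. Gb k \<le> Ga k + 1"
begin

definition pot :: "nat \<Rightarrow> nat \<Rightarrow> bool \<times> nat \<Rightarrow> nat" where
  "pot n x z = cyc (if fst z then Gb else Ga) n ((snd z + n - x) mod n)"

lemma pot_adj_le:
  assumes n: "24 < n" and x: "x < n"
    and z: "z \<in> gp_verts n" "z' \<in> gp_verts n" "gp_adj n 4 z z'"
  shows "pot n x z' \<le> pot n x z + 1"
proof -
  obtain b1 i1 b2 i2 where zz: "z = (b1, i1)" "z' = (b2, i2)" by (cases z, cases z')
  define d1 where "d1 = (i1 + n - x) mod n"
  define d2 where "d2 = (i2 + n - x) mod n"
  have d: "d1 < n" "d2 < n" using n by (auto simp: d1_def d2_def)
  have shift: "d2 = (d1 + c) mod n" if "i2 = (i1 + c) mod n" for c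
    using that offset_add_mod[OF x] by (simp add: d1_def d2_def)
  have shift': "d1 = (d2 + c) mod n" if "i1 = (i2 + c) mod n" for c
    using that offset_add_mod[OF x] by (simp add: d1_def d2_def)
  have pot: "pot n x z = cyc (if b1 then Gb else Ga) n d1"
    "pot n x z' = cyc (if b2 then Gb else Ga) n d2"
    by (simp_all add: pot_def zz d1_def d2_def)
  consider (rim_edge) "\<not> b1" "\<not> b2" "i2 = (i1 + 1) mod n \<or> i1 = (i2 + 1) mod n"
    | (inner_edge) "b1" "b2" "i2 = (i1 + 4) mod n \<or> i1 = (i2 + 4) mod n"
    | (spoke_edge) "b1 \<noteq> b2" "i1 = i2"
    using z(3) zz by (cases b1; cases b2) (auto simp: gp_adj_def)
  then show ?thesis
  proof cases
    case rim_edge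
    then show ?thesis
      using shift[of 1] shift'[of 1]
        cyc_Suc_mod[of Ga, OF rim_Suc d(1)] cyc_Suc_mod[of Ga, OF rim_Suc d(2)]
      unfolding pot by auto
  next
    case inner_edge
    then show ?thesis
      using shift[of 4] shift'[of 4]
        cyc_add_4_mod[of Gb, OF inner_add_4 inner_lower inner_small d(1) n]
        cyc_add_4_mod[of Gb, OF inner_add_4 inner_lower inner_small d(2) n]
      unfolding pot by auto
  next
    case spoke_edge
    then have "d1 = d2" by (simp add: d1_def d2_def)
    then show ?thesis using spoke_edge spoke[of d1] spoke[of "n - d1"]
      unfolding pot cyc_def by (cases b1) (auto simp: min_def)
  qed
qed

lemma gp4_dist_eq_pot:
  assumes n: "24 < n" and x: "x < n" and z: "z \<in> gp_verts n"
    and src: "(if b0 then Gb 0 else Ga 0) = 0"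
    and walk_u: "\<And>e. gp4_walk n (Ga (nat \<bar>e\<bar>)) (b0, x) (gp_u n (int x + e))"
    and walk_v: "\<And>e. gp4_walk n (Gb (nat \<bar>e\<bar>)) (b0, x) (gp_v n (int x + e))"
  shows "gp4_dist n (b0, x) z = pot n x z"
proof (rule gdist_eq_potential)
  show "pot n x z' \<le> pot n x z'' + 1"
    if "z'' \<in> gp_verts n" "z' \<in> gp_verts n" "gp_adj n 4 z'' z'" for z' z''
    using pot_adj_le[OF n x that] .
  show "pot n x (b0, x) = 0" using src by (cases b0) (simp_all add: pot_def cyc_def)
  obtain b i where zi: "z = (b, i)" "i < n" using z by (auto simp: gp_verts_def)
  define d where "d = (i + n - x) mod n"
  have "d < n" using n by (simp add: d_def)
  then have len: "nat \<bar>int d\<bar> = d" "nat \<bar>int d - int n\<bar> = n - d" by auto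
  have "gp_u n (int x + int d) = (False, i)" "gp_u n (int x + (int d - int n)) = (False, i)"
    "gp_v n (int x + int d) = (True, i)" "gp_v n (int x + (int d - int n)) = (True, i)"
    using offset_back_mod[OF x zi(2)] by (simp_all add: gp_u_def gp_v_def d_def)
  then show "gp4_walk n (pot n x z) (b0, x) z"
    using walk_u[of "int d"] walk_u[of "int d - int n"]
      walk_v[of "int d"] walk_v[of "int d - int n"]
    unfolding zi pot_def cyc_def len
    by (cases b) (auto simp: d_def[symmetric] intro: walk_of_len_min)
qed

end

interpretation rim_source: gp4_profile line_uu line_uv
  using line_uu_Suc line_uv_add_4 div_4_le_line line_le_4 line_spoke by unfold_locales auto

interpretation inner_source: gp4_profile line_uv line_vv
  using line_uv_Suc line_vv_add_4 div_4_le_line line_le_4 line_spoke by unfold_locales auto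

lemma gp4_dist_from_u:
  assumes n: "24 < n" and x: "x < n" and j: "j < n"
  shows "gp4_dist n (False, x) (False, j) = cyc line_uu n ((j + n - x) mod n)"
    "gp4_dist n (False, x) (True, j) = cyc line_uv n ((j + n - x) mod n)"
proof -
  have n0: "0 < n" using n by simp
  have walk_u: "gp4_walk n (line_uu (nat \<bar>e\<bar>)) (False, x) (gp_u n (int x + e))" for e
    using gp4_walk_u_u[OF n0, of e "int x"] gp_u_of_nat[OF x] by simp
  have walk_v: "gp4_walk n (line_uv (nat \<bar>e\<bar>)) (False, x) (gp_v n (int x + e))" for e
    using gp4_walk_u_v[OF n0, of e "int x"] gp_u_of_nat[OF x] by simp
  have src: "(if False then line_uv 0 else line_uu 0) = 0" by (simp add: line_uu_def)
  note dist = rim_source.gp4_dist_eq_pot[OF n x _ src walk_u walk_v]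
  show "gp4_dist n (False, x) (False, j) = cyc line_uu n ((j + n - x) mod n)"
    "gp4_dist n (False, x) (True, j) = cyc line_uv n ((j + n - x) mod n)"
    using dist[of "(False, j)"] dist[of "(True, j)"] j
    by (simp_all add: gp_verts_def rim_source.pot_def)
qed

lemma gp4_dist_from_v:
  assumes n: "24 < n" and x: "x < n" and j: "j < n"
  shows "gp4_dist n (True, x) (False, j) = cyc line_uv n ((j + n - x) mod n)"
    "gp4_dist n (True, x) (True, j) = cyc line_vv n ((j + n - x) mod n)"
proof -
  have n0: "0 < n" using n by simp
  have walk_u: "gp4_walk n (line_uv (nat \<bar>e\<bar>)) (True, x) (gp_u n (int x + e))" for e
    using gp4_walk_v_u[OF n0, of e "int x"] gp_v_of_nat[OF x] by simp
  have walk_v: "gp4_walk n (line_vv (nat \<bar>e\<bar>)) (True, x) (gp_v n (int x + e))" for e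
    using gp4_walk_v_v[OF n0, of e "int x"] gp_v_of_nat[OF x] by simp
  have src: "(if True then line_vv 0 else line_uv 0) = 0" by (simp add: line_vv_def)
  note dist = inner_source.gp4_dist_eq_pot[OF n x _ src walk_u walk_v]
  show "gp4_dist n (True, x) (False, j) = cyc line_uv n ((j + n - x) mod n)"
    "gp4_dist n (True, x) (True, j) = cyc line_vv n ((j + n - x) mod n)"
    using dist[of "(False, j)"] dist[of "(True, j)"] j
    by (simp_all add: gp_verts_def inner_source.pot_def)
qed

section \<open>Counting the sets W\<close>

lemma card_less_diff_eq_sum_sgn:
  fixes f g :: "'a \<Rightarrow> nat"
  assumes "finite A"
  shows "int (card {w \<in> A. f w < g w}) - int (card {w \<in> A. g w < f w})
    = (\<Sum>w\<in>A. sgn (int (g w) - int (f w)))"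
proof -
  have "(\<Sum>w\<in>A. sgn (int (g w) - int (f w))) = (\<Sum>w\<in>A. of_bool (f w < g w) - of_bool (g w < f w))"
    by (rule sum.cong) (auto simp: sgn_if)
  also have "\<dots> = int (card (A \<inter> {w. f w < g w})) - int (card (A \<inter> {w. g w < f w}))"
    using assms by (simp add: sum_subtractf)
  also have "A \<inter> {w. f w < g w} = {w \<in> A. f w < g w}" by auto
  also have "A \<inter> {w. g w < f w} = {w \<in> A. g w < f w}" by auto
  finally show ?thesis by simp
qed

lemma gp_verts_eq: "gp_verts n = Pair False ` {..<n} \<union> Pair True ` {..<n}"
  by (auto simp: gp_verts_def image_iff)

lemma cyc_minus_mod: "i < n \<Longrightarrow> cyc G n ((n - i) mod n) = cyc G n i"
  by (cases "i = 0") (auto simp: cyc_def min.commute)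

lemma reflect_mod:
  fixes s t n :: nat
  assumes "s < n" "t < n"
  shows "(t + n - (t + n - s) mod n) mod n = s"
proof -
  have h: "(t + n - s) mod n < n" using assms by simp
  have "int ((t + n - (t + n - s) mod n) mod n)
      = (int t + int n - int ((t + n - s) mod n)) mod int n"
    using h by (simp add: of_nat_mod)
  also have "int ((t + n - s) mod n) = (int t + int n - int s) mod int n"
    using assms by (simp add: of_nat_mod)
  also have "(int t + int n - (int t + int n - int s) mod int n) mod int n = int s"
    using assms by (simp add: mod_diff_right_eq)
  finally show ?thesis by simp
qed

text \<open>u_s is as far from v_t as v_(t-s) is from u_0, namely cyc line_uv n (t - s). Pairing the two,
  imbalance_term n t s is their joint contribution to |W(u_0,v_t)| - |W(v_t,u_0)|.\<close>

definition imbalance_term :: "nat \<Rightarrow> nat \<Rightarrow> nat \<Rightarrow> int" where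
  "imbalance_term n t s =
     sgn (int (cyc line_uv n ((t + n - s) mod n)) - int (cyc line_uu n s))
     + sgn (int (cyc line_vv n s) - int (cyc line_uv n ((t + n - s) mod n)))"

definition imbalance :: "nat \<Rightarrow> nat \<Rightarrow> int" where
  "imbalance n t = (\<Sum>s<n. imbalance_term n t s)"

lemma card_Wset_diff_eq_imbalance:
  assumes n: "24 < n" and t: "t < n"
  shows "int (card (Wset (gp_verts n) (gp_adj n 4) (False, 0) (True, t)))
       - int (card (Wset (gp_verts n) (gp_adj n 4) (True, t) (False, 0))) = imbalance n t"
proof -
  define f where "f w = sgn (int (gp4_dist n w (True, t)) - int (gp4_dist n w (False, 0)))" for w
  have "int (card (Wset (gp_verts n) (gp_adj n 4) (False, 0) (True, t)))
      - int (card (Wset (gp_verts n) (gp_adj n 4) (True, t) (False, 0))) = (\<Sum>w\<in>gp_verts n. f w)"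
    unfolding Wset_def f_def by (rule card_less_diff_eq_sum_sgn) (simp add: gp_verts_eq)
  also have "\<dots> = (\<Sum>s<n. f (False, s)) + (\<Sum>s<n. f (True, s))"
    unfolding gp_verts_eq by (subst sum.union_disjoint) (auto simp: sum.reindex inj_on_def)
  also have "(\<Sum>s<n. f (True, s)) = (\<Sum>s<n. f (True, (t + n - s) mod n))"
    by (rule sum.reindex_bij_witness[where i = "\<lambda>s. (t + n - s) mod n"
          and j = "\<lambda>s. (t + n - s) mod n"])
       (use n t reflect_mod in auto)
  also have "(\<Sum>s<n. f (False, s)) + (\<Sum>s<n. f (True, (t + n - s) mod n)) = imbalance n t"
    unfolding imbalance_def sum.distrib[symmetric]
  proof (rule sum.cong)
    fix s assume "s \<in> {..<n}"
    then have s: "s < n" by simp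
    define h where "h = (t + n - s) mod n"
    have h: "h < n" using s by (simp add: h_def)
    have "f (False, s) = sgn (int (cyc line_uv n h) - int (cyc line_uu n s))"
      unfolding f_def
      using gp4_dist_from_u[OF n s t] gp4_dist_from_u[OF n s, of 0] cyc_minus_mod[OF s] n
      by (simp add: h_def)
    moreover have "f (True, h) = sgn (int (cyc line_vv n s) - int (cyc line_uv n h))"
      unfolding f_def
      using gp4_dist_from_v[OF n h t] gp4_dist_from_v[OF n h, of 0] cyc_minus_mod[OF h] n
        reflect_mod[OF s t]
      by (simp add: h_def)
    ultimately show "f (False, s) + f (True, (t + n - s) mod n) = imbalance_term n t s"
      unfolding imbalance_term_def h_def by simp
  qed simp
  finally show ?thesis .
qed

lemma not_distance_balanced_if_imbalance:
  assumes "24 < n" "t < n" "imbalance n t \<noteq> 0"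
  shows "\<not> l_distance_balanced (gp_verts n) (gp_adj n 4) (cyc line_uv n t)"
proof -
  have "gp4_dist n (False, 0) (True, t) = cyc line_uv n t"
    using gp4_dist_from_u(2)[OF assms(1) _ assms(2), of 0] assms(1,2) by simp
  moreover have "(False, 0) \<in> gp_verts n" "(True, t) \<in> gp_verts n"
    using assms(1,2) by (auto simp: gp_verts_def)
  ultimately show ?thesis
    using card_Wset_diff_eq_imbalance[OF assms(1,2)] assms(3)
    unfolding l_distance_balanced_def by force
qed

text \<open>For all other offsets v_s is at least as close to v_0 as u_s is to u_0, which makes the
  imbalance term non-positive.\<close>

definition exceptional_offsets :: "nat \<Rightarrow> nat list" where
  "exceptional_offsets n = [1, 2, 3, n - 1, n - 2, n - 3]"

lemma line_vv_le_line_uu: "k = 0 \<or> 4 \<le> k \<Longrightarrow> line_vv k \<le> line_uu k"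
  by (cases k rule: nat_cases_mod_4) (auto simp: line_defs)

lemma imbalance_term_nonpos:
  assumes "24 < n" "s < n" "s \<notin> set (exceptional_offsets n)"
  shows "imbalance_term n t s \<le> 0"
proof -
  have "cyc line_vv n s \<le> cyc line_uu n s"
  proof (cases "s = 0")
    case True
    then show ?thesis by (simp add: cyc_def line_defs)
  next
    case False
    then have "4 \<le> s" "4 \<le> n - s" using assms by (auto simp: exceptional_offsets_def)
    then show ?thesis
      using line_vv_le_line_uu[of s] line_vv_le_line_uu[of "n - s"] by (auto simp: cyc_def)
  qed
  then show ?thesis unfolding imbalance_term_def by (auto simp: sgn_if)
qed

lemma imbalance_neg_if_partial_sum_neg:
  assumes "24 < n" "set (exceptional_offsets n) \<subseteq> P" "P \<subseteq> {..<n}" "sum (imbalance_term n t) P < 0"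
  shows "imbalance n t < 0"
proof -
  have "sum (imbalance_term n t) ({..<n} - P) \<le> 0"
    by (rule sum_nonpos) (use assms imbalance_term_nonpos in blast)
  moreover have "imbalance n t = sum (imbalance_term n t) ({..<n} - P) + sum (imbalance_term n t) P"
    unfolding imbalance_def by (rule sum.subset_diff[OF assms(3) finite_lessThan])
  ultimately show ?thesis using assms(4) by linarith
qed

section \<open>The case l \<ge> 8\<close>

lemma cyc_line_uv_shift:
  assumes "i < n"
  shows "cyc line_uv n i \<le> cyc line_uv n ((i + k) mod n) + k
    \<and> cyc line_uv n ((i + k) mod n) \<le> cyc line_uv n i + k"
proof (induction k)
  case (Suc k)
  have "(i + Suc k) mod n = ((i + k) mod n + 1) mod n" by (simp add: mod_Suc_eq)
  moreover have "(i + k) mod n < n" using assms by simp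
  ultimately show ?case
    using Suc cyc_Suc_mod[of line_uv, OF line_uv_Suc, of "(i + k) mod n" n] by simp
qed (use assms in simp)

lemma line_uv_4q: "line_uv (4 * q + 2) = q + 3" "line_uv (4 * q + 3) = q + 3"
  by (simp_all add: line_uv_def mod_Suc div_Suc)

lemma line_uv_lower: "4 * l \<le> m + 10 \<Longrightarrow> m + 8 \<noteq> 4 * l \<Longrightarrow> l \<le> line_uv m"
  by (cases m rule: nat_cases_mod_4) (simp_all add: line_uv_def mod_Suc div_Suc; presburger)+

text \<open>For l \<ge> 8, at an exceptional offset s the vertex v_(t-s) is closer to v_t than to u_0,
  which cancels the contribution of u_s.\<close>

lemma imbalance_term_exceptional_nonpos:
  assumes n: "24 < n" and t: "t < n" and l: "8 \<le> cyc line_uv n t"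
    and s: "s \<in> set (exceptional_offsets n)"
  shows "imbalance_term n t s \<le> 0"
proof -
  obtain k where k: "k \<in> {1, 2, 3}" "s = k \<or> s = n - k"
    using s unfolding exceptional_offsets_def by auto
  have "cyc line_vv n s \<le> line_vv k" using k n by (auto simp: cyc_def)
  also have "line_vv k \<le> 4" using k(1) by (auto simp: line_vv_def)
  finally have vv: "cyc line_vv n s \<le> 4" .
  have "cyc line_uv n t \<le> cyc line_uv n ((t + n - s) mod n) + k"
    using k(2)
  proof
    assume "s = k"
    have "((t + n - s) mod n + k) mod n = (t + n - s + k) mod n" by (simp add: mod_add_left_eq)
    also have "t + n - s + k = t + n" using \<open>s = k\<close> k(1) n by auto
    finally have "((t + n - s) mod n + k) mod n = t" using t by simp
    then show ?thesis using cyc_line_uv_shift[of "(t + n - s) mod n" n k] n by simp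
  next
    assume "s = n - k"
    moreover have "k < n" using k(1) n by auto
    ultimately have "(t + n - s) mod n = (t + k) mod n" by simp
    then show ?thesis using cyc_line_uv_shift[OF t, of k] by simp
  qed
  then have "4 < cyc line_uv n ((t + n - s) mod n)" using k(1) l by auto
  with vv show ?thesis unfolding imbalance_term_def by (auto simp: sgn_if)
qed

lemma imbalance_term_4j_neg:
  assumes n: "24 < n" and l: "8 \<le> l" "8 * l \<le> n + 20" and j: "j = l div 2"
    and t: "t < n" "4 * j \<le> t" "line_uv (t - 4 * j) = l - j"
  shows "imbalance_term n t (4 * j) < 0"
proof -
  have j1: "4 \<le> j" "2 * j \<le> l" "l \<le> 2 * j + 1" using j l by auto
  then have nj: "8 * j \<le> n" using l by linarith
  have "line_uu (4 * j) = j + 2" using j1 by (simp add: line_uu_def)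
  moreover have "4 \<le> n - 4 * j" "j \<le> (n - 4 * j) div 4"
    using nj j1 by (auto simp: less_eq_div_iff_mult_less_eq)
  then have "j + 2 \<le> line_uu (n - 4 * j)" by (simp add: line_uu_def)
  ultimately have uu: "cyc line_uu n (4 * j) = j + 2" by (simp add: cyc_def)
  have vv: "cyc line_vv n (4 * j) \<le> j" by (simp add: cyc_def line_vv_def)
  have "(t + n - 4 * j) mod n = t - 4 * j" using t by (simp add: le_mod_geq)
  moreover have "cyc line_uv n (t - 4 * j) \<le> l - j" using t(3) by (simp add: cyc_def)
  moreover have "j \<le> cyc line_uv n (t - 4 * j)"
  proof -
    have "4 * j \<le> n - (t - 4 * j)" using t by linarith
    then have "j \<le> line_uv (n - (t - 4 * j))"
      using div_4_le_line(2)[of "n - (t - 4 * j)"] by linarith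
    then show ?thesis using t(3) j1 by (simp add: cyc_def)
  qed
  ultimately show ?thesis using uu vv j1 unfolding imbalance_term_def by (auto simp: sgn_if)
qed

lemma exists_negative_imbalance_large:
  assumes n: "24 < n" and l: "8 \<le> l" "l \<le> (n + 4) div 8 + 2"
  shows "\<exists>t<n. cyc line_uv n t = l \<and> imbalance n t < 0"
proof -
  have l20: "8 * l \<le> n + 20" using l by linarith
  define j where "j = l div 2"
  \<comment> \<open>line_uv (4 l - 10) = l; only for n = 8 l - 18 is the way round the other side shorter.\<close>
  define t where "t = (if n + 18 = 8 * l then 4 * l - 9 else 4 * l - 10)"
  have tq: "t = 4 * (l - 3) + 2 \<or> t = 4 * (l - 3) + 3" using l by (auto simp: t_def)
  have t: "t < n" "4 * j \<le> t" using l20 l by (auto simp: t_def j_def)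
  have "line_uv t = l" using tq l line_uv_4q[of "l - 3"] by auto
  moreover have "l \<le> line_uv (n - t)"
    by (rule line_uv_lower) (use l20 l in \<open>auto simp: t_def\<close>)
  ultimately have dist: "cyc line_uv n t = l" by (simp add: cyc_def)
  have "j + 3 \<le> l" using l by (simp add: j_def)
  then have "t - 4 * j = 4 * (l - 3 - j) + 2 \<or> t - 4 * j = 4 * (l - 3 - j) + 3"
    using tq by arith
  then have "line_uv (t - 4 * j) = l - j" using l line_uv_4q[of "l - 3 - j"] by (auto simp: j_def)
  then have neg: "imbalance_term n t (4 * j) < 0"
    using imbalance_term_4j_neg[OF n l(1) l20 j_def t] by blast
  have "sum (imbalance_term n t) (set (exceptional_offsets n)) \<le> 0"
    by (rule sum_nonpos) (use imbalance_term_exceptional_nonpos[OF n t(1)] dist l in auto)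
  moreover have "4 * j \<notin> set (exceptional_offsets n)"
    using l l20 n by (auto simp: exceptional_offsets_def j_def)
  ultimately have "sum (imbalance_term n t) (insert (4 * j) (set (exceptional_offsets n))) < 0"
    using neg by simp
  moreover have "insert (4 * j) (set (exceptional_offsets n)) \<subseteq> {..<n}"
    using n t by (auto simp: exceptional_offsets_def)
  ultimately have "imbalance n t < 0" by (intro imbalance_neg_if_partial_sum_neg[OF n]) auto
  with t(1) dist show ?thesis by blast
qed

section \<open>The cases 3 \<le> l \<le> 7\<close>

definition certifies :: "nat \<Rightarrow> nat \<Rightarrow> nat \<times> nat list \<Rightarrow> bool" where
  "certifies n l c \<longleftrightarrow> (case c of (t, E) \<Rightarrow> t < n \<and> cyc line_uv n t = l
     \<and> distinct E \<and> (\<forall>e\<in>set E. 3 < e \<and> e + 3 < n)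
     \<and> sum_list (map (imbalance_term n t) (exceptional_offsets n @ E)) < 0)"

lemma exists_negative_imbalance_if_certifies:
  assumes n: "24 < n" and c: "certifies n l c"
  shows "\<exists>t<n. cyc line_uv n t = l \<and> imbalance n t < 0"
proof -
  obtain t E where tE: "c = (t, E)" by fastforce
  have "distinct (exceptional_offsets n @ E)"
    using c n by (auto simp: certifies_def tE exceptional_offsets_def)
  then have "sum (imbalance_term n t) (set (exceptional_offsets n @ E))
      = sum_list (map (imbalance_term n t) (exceptional_offsets n @ E))"
    by (rule sum.distinct_set_conv_list)
  moreover have "set (exceptional_offsets n) \<subseteq> {..<n}"
    using n by (auto simp: exceptional_offsets_def)
  ultimately have "imbalance n t < 0"
    using c n by (intro imbalance_neg_if_partial_sum_neg[of n "set (exceptional_offsets n @ E)" t])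
      (auto simp: certifies_def tE)
  then show ?thesis using c by (auto simp: certifies_def tE)
qed

text \<open>Found by a computer search: the last five entries work for all n \<ge> 50 and for all but
  the seven listed small cases.\<close>

definition certificate :: "nat \<Rightarrow> nat \<Rightarrow> nat \<times> nat list" where
  "certificate n l =
    (if (n, l) = (25, 3) then (8, [4, 13]) else if (n, l) = (28, 3) then (8, [4, 16])
     else if (n, l) = (26, 4) then (12, [4, 8, 14]) else if (n, l) = (27, 4) then (12, [4, 8, 15])
     else if (n, l) = (25, 5) then (11, [8, 13, 17]) else if (n, l) = (30, 6) then (15, [8, 12, 18])
     else if (n, l) = (38, 7) then (19, [12])
     else if l = 3 then (3, [4, 8, 12, 16]) else if l = 4 then (12, [4, 8])
     else if l = 5 then (13, [8]) else if l = 6 then (14, [8, 12, 16, 17]) else (18, [12]))"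

lemma cyc_eq_line:
  assumes "\<And>m. m div 4 \<le> G m" and "k + 4 * G k \<le> n"
  shows "cyc G n k = G k"
proof -
  have "G k \<le> (n - k) div 4" using assms(2) by (simp add: less_eq_div_iff_mult_less_eq)
  then show ?thesis using assms(1)[of "n - k"] by (simp add: cyc_def)
qed

lemma cyc_flip: "k \<le> n \<Longrightarrow> cyc G n (n - k) = cyc G n k"
  by (simp add: cyc_def min.commute)

lemma offset_eval:
  fixes s t n k :: nat
  shows "s \<le> t \<Longrightarrow> t < n \<Longrightarrow> (t + n - s) mod n = t - s"
    and "t < s \<Longrightarrow> s < n \<Longrightarrow> (t + n - s) mod n = n - (s - t)"
    and "k \<le> n \<Longrightarrow> t + k < n \<Longrightarrow> (t + n - (n - k)) mod n = t + k"
proof -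
  assume "s \<le> t" "t < n"
  then have "n \<le> t + n - s" by arith
  then have "(t + n - s) mod n = (t + n - s - n) mod n" by (rule le_mod_geq)
  also have "\<dots> = t - s" using \<open>s \<le> t\<close> \<open>t < n\<close> by simp
  finally show "(t + n - s) mod n = t - s" .
next
  assume "t < s" "s < n"
  then have "t + n - s = n - (s - t)" "n - (s - t) < n" by arith+
  then show "(t + n - s) mod n = n - (s - t)" by simp
next
  assume "k \<le> n" "t + k < n"
  then have "t + n - (n - k) = t + k" by arith
  with \<open>t + k < n\<close> show "(t + n - (n - k)) mod n = t + k" by simp
qed

lemma certifies_certificate_large:
  assumes "50 \<le> n" "3 \<le> l" "l \<le> 7"
  shows "certifies n l (certificate n l)"
proof -
  note eval = cyc_eq_line[of line_uu, OF div_4_le_line(1)]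
    cyc_eq_line[of line_uv, OF div_4_le_line(2)] cyc_eq_line[of line_vv, OF div_4_le_line(3)]
    cyc_flip offset_eval line_defs mod_Suc
  have "l = 3 \<or> l = 4 \<or> l = 5 \<or> l = 6 \<or> l = 7" using assms(2,3) by linarith
  then show ?thesis
    using assms(1) by (elim disjE)
      (simp_all add: certificate_def, simp_all only: certifies_def prod.case,
        simp_all add: exceptional_offsets_def imbalance_term_def eval)
qed

lemma certifies_certificate_small:
  assumes "24 < n" "n < 50" "3 \<le> l" "l \<le> 7" "l \<le> (n + 4) div 8 + 2"
  shows "certifies n l (certificate n l)"
proof -
  have "\<forall>n\<in>{25..<50}. \<forall>l\<in>{3..min 7 ((n + 4) div 8 + 2)}. certifies n l (certificate n l)"
    by (simp add: atLeastLessThan_upt atLeastAtMost_upt upt_rec certificate_def,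
        simp only: certifies_def prod.case,
        simp add: exceptional_offsets_def imbalance_term_def cyc_def line_defs)
  with assms show ?thesis by auto
qed

section \<open>The diameter\<close>

lemma line_le_diameter_bound:
  assumes "2 * m \<le> n"
  shows "line_uu m \<le> (n + 4) div 8 + 3" "line_uv m \<le> (n + 4) div 8 + 3"
    "line_vv m \<le> (n + 4) div 8 + 3"
proof -
  have "line_uu m \<le> (n + 4) div 8 + 3 \<and> line_uv m \<le> (n + 4) div 8 + 3
      \<and> line_vv m \<le> (n + 4) div 8 + 3"
  proof (cases m rule: nat_cases_mod_4)
    case (1 q)
    then have "q \<le> (n + 4) div 8" using assms by (simp add: less_eq_div_iff_mult_less_eq)
    then show ?thesis using 1 by (simp add: line_defs)
  next
    case (2 q)
    then have "q \<le> (n + 4) div 8" using assms by (simp add: less_eq_div_iff_mult_less_eq)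
    then show ?thesis using 2 by (simp add: line_defs mod_Suc div_Suc)
  next
    case (3 q)
    then have "q + 1 \<le> (n + 4) div 8" using assms by (simp add: less_eq_div_iff_mult_less_eq)
    then show ?thesis using 3 by (simp add: line_defs mod_Suc div_Suc)
  next
    case (4 q)
    then have "q + 1 \<le> (n + 4) div 8" using assms by (simp add: less_eq_div_iff_mult_less_eq)
    then show ?thesis using 4 by (simp add: line_defs mod_Suc div_Suc)
  qed
  then show "line_uu m \<le> (n + 4) div 8 + 3" "line_uv m \<le> (n + 4) div 8 + 3"
    "line_vv m \<le> (n + 4) div 8 + 3" by auto
qed

lemma cyc_le_half_bound:
  assumes "\<And>m. 2 * m \<le> n \<Longrightarrow> G m \<le> K" and "i \<le> n"
  shows "cyc G n i \<le> K"
proof -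
  have "2 * i \<le> n \<or> 2 * (n - i) \<le> n" using assms(2) by linarith
  then show ?thesis
    using assms(1)[of i] assms(1)[of "n - i"] by (auto simp: cyc_def min_le_iff_disj)
qed

lemma gdiam_gp4_le:
  assumes n: "24 < n"
  shows "gdiam (gp_verts n) (gp_adj n 4) \<le> (n + 4) div 8 + 3"
  unfolding gdiam_def
proof (rule Max.boundedI)
  have "{gp4_dist n x y | x y. x \<in> gp_verts n \<and> y \<in> gp_verts n}
      = (\<lambda>(x, y). gp4_dist n x y) ` (gp_verts n \<times> gp_verts n)" by auto
  then show "finite {gp4_dist n x y | x y. x \<in> gp_verts n \<and> y \<in> gp_verts n}"
    by (simp add: gp_verts_eq)
  have "(False, 0) \<in> gp_verts n" using n by (simp add: gp_verts_def)
  then show "{gp4_dist n x y | x y. x \<in> gp_verts n \<and> y \<in> gp_verts n} \<noteq> {}" by blast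
next
  fix d assume "d \<in> {gp4_dist n x y | x y. x \<in> gp_verts n \<and> y \<in> gp_verts n}"
  then obtain b i c j where d: "d = gp4_dist n (b, i) (c, j)" "i < n" "j < n"
    by (auto simp: gp_verts_def)
  have "(j + n - i) mod n \<le> n" using n by (simp add: less_imp_le)
  note bound = cyc_le_half_bound[OF _ this]
  show "d \<le> (n + 4) div 8 + 3"
    using gp4_dist_from_u[OF n d(2,3)] gp4_dist_from_v[OF n d(2,3)]
      bound[of line_uu] bound[of line_uv] bound[of line_vv] line_le_diameter_bound
    unfolding d(1) by (cases b; cases c) auto
qed

theorem proposition3p3:
  fixes n l :: nat
  assumes "n > 24" and "3 \<le> l" and "l < gdiam (gp_verts n) (gp_adj n 4)"
  shows "\<not> l_distance_balanced (gp_verts n) (gp_adj n 4) l"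
proof -
  have n: "24 < n" using assms(1) by simp
  have l_le: "l \<le> (n + 4) div 8 + 2" using gdiam_gp4_le[OF n] assms(3) by linarith
  obtain t where t: "t < n" "cyc line_uv n t = l" "imbalance n t < 0"
  proof (cases "8 \<le> l")
    case True
    then show ?thesis using exists_negative_imbalance_large[OF n True l_le] that by blast
  next
    case False
    then have "certifies n l (certificate n l)"
      using certifies_certificate_large certifies_certificate_small n assms(2) l_le
      by (cases "50 \<le> n") auto
    then show ?thesis using exists_negative_imbalance_if_certifies[OF n] that by blast
  qed
  then show ?thesis using not_distance_balanced_if_imbalance[OF n] by fastforce
qed

end
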